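(* Let $G$ be a periodic group and let $x\in G$ be such that $[G,x]$ is a Chernikov group. Let $R$ be the radicable part of $[G,x]$ and assume that $[R,x]=\{1\}$. Then $R=\{1\}$.
   Context: For a subgroup $H$ and element $x$ of a group $G$, $[H,x]$ is the subgroup generated by all commutators $[a,x]=a^{-1}x^{-1}ax$ with $a\in H$. A group is radicable if every equation $y^s=a$ ($s$ a positive integer) has a solution in it. A Chernikov group $K$ has a radicable abelian normal subgroup $R$ (its radicable part, or finite residual) which is a direct product of finitely many Prüfer groups $C_{p^\infty}$ and with $K/R$ finite. *)

theory Defs
  imports "HOL-Algebra.Algebra"
begin

definition commutator :: "('a, 'b) monoid_scheme \<Rightarrow> 'a \<Rightarrow> 'a \<Rightarrow> 'a" where
  "commutator G a x = inv\<^bsub>G\<^esub> a \<otimes>\<^bsub>G\<^esub> inv\<^bsub>G\<^esub> x \<otimes>\<^bsub>G\<^esub> a \<otimes>\<^bsub>G\<^esub> x"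

definition comm_subgroup :: "('a, 'b) monoid_scheme \<Rightarrow> 'a set \<Rightarrow> 'a \<Rightarrow> 'a set" where
  "comm_subgroup G H x = generate G {commutator G a x | a. a \<in> H}"

definition periodic_group :: "('a, 'b) monoid_scheme \<Rightarrow> bool" where
  "periodic_group G \<longleftrightarrow> group G \<and> (\<forall>g \<in> carrier G. \<exists>n::nat. n > 0 \<and> g [^]\<^bsub>G\<^esub> n = \<one>\<^bsub>G\<^esub>)"

definition radicable :: "('a, 'b) monoid_scheme \<Rightarrow> 'a set \<Rightarrow> bool" where
  "radicable G R \<longleftrightarrow> (\<forall>a \<in> R. \<forall>s::nat. s > 0 \<longrightarrow> (\<exists>y \<in> R. y [^]\<^bsub>G\<^esub> s = a))"

text \<open>The Pruefer p-group C_{p^\<infinity>}, modelled as the rationals in [0,1) with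
  p-power denominators under addition modulo 1.\<close>
definition prufer_group :: "nat \<Rightarrow> rat monoid" where
  "prufer_group p = \<lparr> carrier = {q. \<exists>(k::int) (n::nat). q = of_int k / of_nat (p ^ n) \<and> 0 \<le> q \<and> q < 1},
                      monoid.mult = (\<lambda>a b. frac (a + b)),
                      one = 0 \<rparr>"

definition radicable_part_of :: "('a, 'b) monoid_scheme \<Rightarrow> 'a set \<Rightarrow> 'a set \<Rightarrow> bool" where
  "radicable_part_of G K R \<longleftrightarrow>
     subgroup K G \<and> R \<lhd> (G\<lparr>carrier := K\<rparr>) \<and>
     comm_group (G\<lparr>carrier := R\<rparr>) \<and> radicable G R \<and>
     (\<exists>(n::nat) (p::nat \<Rightarrow> nat). (\<forall>i < n. Factorial_Ring.prime (p i)) \<and>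
        G\<lparr>carrier := R\<rparr> \<cong> product_group {..<n} (\<lambda>i. prufer_group (p i))) \<and>
     finite (rcosets\<^bsub>G\<lparr>carrier := K\<rparr>\<^esub> R)"

definition chernikov :: "('a, 'b) monoid_scheme \<Rightarrow> 'a set \<Rightarrow> bool" where
  "chernikov G K \<longleftrightarrow> (\<exists>R. radicable_part_of G K R)"

end

theory Submission
  imports Defs
begin

(* Since R is radicable of finite index m in the normal subgroup [G,x], every element of R is
   the m-th power of an element of R, and m-th powers of elements of [G,x] lie in R; hence R is
   normal in G. As x centralizes R, so does every conjugate of x, hence so does the normal
   closure L = [G,x]<x> of x, in which R has finite index because x has finite order n.
   The transfer V : L -> R then satisfies V r = r^|L:R| on R, while V(L) is generated by the
   images of the conjugates of x, which have order dividing n in the abelian group R.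
   Writing r = y^(|L:R| n) with y in R gives r = (V y)^n = 1. *)

lemma (in group) inv_mult_cancel_left [simp]:
  "x \<in> carrier G \<Longrightarrow> y \<in> carrier G \<Longrightarrow> inv x \<otimes> (x \<otimes> y) = y"
  by (simp add: m_assoc[symmetric])

lemma (in group) mult_inv_cancel_left [simp]:
  "x \<in> carrier G \<Longrightarrow> y \<in> carrier G \<Longrightarrow> x \<otimes> (inv x \<otimes> y) = y"
  by (simp add: m_assoc[symmetric])

lemma (in group) rcosets_r_coset_closed:
  assumes "H \<subseteq> carrier G" "c \<in> rcosets H" "g \<in> carrier G"
  shows "c #> g \<in> rcosets H"
proof -
  obtain a where a: "a \<in> carrier G" "c = H #> a"
    using assms(2) by (auto simp: RCOSETS_def)
  then have "c #> g = H #> (a \<otimes> g)"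
    using assms(1,3) by (simp add: coset_mult_assoc)
  then show ?thesis
    using a(1) assms by (simp add: rcosetsI)
qed

lemma (in group) bij_betw_rcosets_r_coset:
  assumes "subgroup H G" "g \<in> carrier G"
  shows "bij_betw (\<lambda>c. c #> g) (rcosets H) (rcosets H)"
proof (rule bij_betw_byWitness[where f' = "\<lambda>c. c #> inv g"])
  have H: "H \<subseteq> carrier G"
    using assms(1) by (rule subgroup.subset)
  have "c #> a #> b = c #> (a \<otimes> b)" if "c \<in> rcosets H" "a \<in> carrier G" "b \<in> carrier G" for c a b
    using that assms(1) by (simp add: coset_mult_assoc subgroup.rcosets_carrier is_group)
  then show "\<forall>c\<in>rcosets H. c #> g #> inv g = c" "\<forall>c\<in>rcosets H. c #> inv g #> g = c"
    using assms(2) H by (simp_all add: coset_mult_one subgroup.rcosets_carrier[OF assms(1) is_group])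
  show "(\<lambda>c. c #> g) ` (rcosets H) \<subseteq> rcosets H" "(\<lambda>c. c #> inv g) ` (rcosets H) \<subseteq> rcosets H"
    using H assms(2) by (auto intro: rcosets_r_coset_closed)
qed

lemma (in group) conj_nat_pow:
  assumes "a \<in> carrier G" "g \<in> carrier G"
  shows "(g \<otimes> a \<otimes> inv g) [^] (n :: nat) = g \<otimes> a [^] n \<otimes> inv g"
  using assms by (induction n) (simp_all add: m_assoc)

lemma (in group) pow_card_rcosets_in_normal:
  assumes N: "N \<lhd> G" and finite_index: "finite (rcosets N)" and g: "g \<in> carrier G"
  shows "g [^] card (rcosets N) \<in> N"
proof -
  interpret N: normal N G
    by (rule N)
  have "N #> g \<in> carrier (G Mod N)"
    using g by (simp add: FactGroup_def rcosetsI N.subset)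
  then have "(N #> g) [^]\<^bsub>G Mod N\<^esub> order (G Mod N) = N"
    using group.pow_order_eq_1[OF N.factorgroup_is_group] by (simp add: FactGroup_def)
  then have "N #> (g [^] card (rcosets N)) = N"
    using N.FactGroup_pow[OF g] by (simp add: order_def FactGroup_def)
  then show ?thesis
    using coset_join1 N.subgroup_axioms g by blast
qed

lemma (in group) generate_normalI:
  assumes S: "S \<subseteq> carrier G"
    and conj: "\<And>g s. g \<in> carrier G \<Longrightarrow> s \<in> S \<Longrightarrow> g \<otimes> s \<otimes> inv g \<in> generate G S"
  shows "generate G S \<lhd> G"
proof -
  have "g \<otimes> h \<otimes> inv g \<in> generate G S" if "h \<in> generate G S" "g \<in> carrier G" for g h
    using that(1)
  proof induction
    case one
    then show ?case
      using that(2) by (simp add: generate.one)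
  next
    case (incl s)
    then show ?case
      using conj that(2) by blast
  next
    case (inv s)
    then have "g \<otimes> inv s \<otimes> inv g = inv (g \<otimes> s \<otimes> inv g)"
      using S that(2) by (auto simp: inv_mult_group m_assoc)
    then show ?case
      using generate_m_inv_closed[OF S] conj[OF that(2) inv] by simp
  next
    case (eng h1 h2)
    have "h1 \<in> carrier G" "h2 \<in> carrier G"
      using eng.hyps generate_in_carrier[OF S] by auto
    then have "g \<otimes> (h1 \<otimes> h2) \<otimes> inv g = (g \<otimes> h1 \<otimes> inv g) \<otimes> (g \<otimes> h2 \<otimes> inv g)"
      using that(2) by (simp add: m_assoc)
    then show ?case
      using eng.IH by (simp add: generate.eng)
  qed
  then show ?thesis
    using S by (simp add: normal_inv_iff generate_is_subgroup)
qed

definition centralizer :: "('a, 'b) monoid_scheme \<Rightarrow> 'a set \<Rightarrow> 'a set" where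
  "centralizer G H = {g \<in> carrier G. \<forall>h \<in> H. g \<otimes>\<^bsub>G\<^esub> h = h \<otimes>\<^bsub>G\<^esub> g}"

lemma centralizerI:
  "g \<in> carrier G \<Longrightarrow> (\<And>h. h \<in> H \<Longrightarrow> g \<otimes>\<^bsub>G\<^esub> h = h \<otimes>\<^bsub>G\<^esub> g)
    \<Longrightarrow> g \<in> centralizer G H"
  by (simp add: centralizer_def)

lemma centralizerD:
  assumes "g \<in> centralizer G H"
  shows "g \<in> carrier G" "h \<in> H \<Longrightarrow> g \<otimes>\<^bsub>G\<^esub> h = h \<otimes>\<^bsub>G\<^esub> g"
  using assms by (simp_all add: centralizer_def)

lemma (in group) subgroup_centralizer:
  assumes H: "H \<subseteq> carrier G"
  shows "subgroup (centralizer G H) G"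
proof (rule subgroupI)
  fix a b assume a: "a \<in> centralizer G H" and b: "b \<in> centralizer G H"
  show "a \<otimes> b \<in> centralizer G H"
  proof (rule centralizerI)
    fix h assume h: "h \<in> H"
    have "a \<otimes> b \<otimes> h = a \<otimes> (h \<otimes> b)"
      using centralizerD[OF a] centralizerD[OF b] h H by (auto simp: m_assoc)
    also have "\<dots> = h \<otimes> (a \<otimes> b)"
      using centralizerD[OF a] centralizerD[OF b] h H by (auto simp: m_assoc[symmetric])
    finally show "a \<otimes> b \<otimes> h = h \<otimes> (a \<otimes> b)" .
  qed (use centralizerD[OF a] centralizerD[OF b] in simp)
next
  fix a assume a: "a \<in> centralizer G H"
  show "inv a \<in> centralizer G H"
  proof (rule centralizerI)
    fix h assume h: "h \<in> H"
    have ac: "a \<in> carrier G" and hc: "h \<in> carrier G"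
      using centralizerD[OF a] h H by auto
    have "inv a \<otimes> h = inv a \<otimes> (h \<otimes> a) \<otimes> inv a"
      using ac hc by (simp add: m_assoc)
    also have "\<dots> = inv a \<otimes> (a \<otimes> h) \<otimes> inv a"
      using centralizerD(2)[OF a h] by simp
    also have "\<dots> = h \<otimes> inv a"
      using ac hc by (simp add: m_assoc)
    finally show "inv a \<otimes> h = h \<otimes> inv a" .
  qed (use centralizerD[OF a] in simp)
next
  have "\<one> \<in> centralizer G H"
    using H by (intro centralizerI) auto
  then show "centralizer G H \<noteq> {}"
    by blast
qed (auto simp: centralizer_def)

lemma (in group) normal_centralizer:
  assumes N: "N \<lhd> G"
  shows "centralizer G N \<lhd> G"
proof -
  have N_carrier: "N \<subseteq> carrier G"
    using N normal_imp_subgroup subgroup.subset by blast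
  have "g \<otimes> c \<otimes> inv g \<in> centralizer G N" if g: "g \<in> carrier G" and c: "c \<in> centralizer G N" for g c
  proof (rule centralizerI)
    fix r assume r: "r \<in> N"
    have r': "inv g \<otimes> r \<otimes> g \<in> N"
      using normal.inv_op_closed1[OF N g r] .
    have cc: "c \<in> carrier G" and rc: "r \<in> carrier G"
      using centralizerD(1)[OF c] r N_carrier by auto
    have "g \<otimes> c \<otimes> inv g \<otimes> r = g \<otimes> (c \<otimes> (inv g \<otimes> r \<otimes> g)) \<otimes> inv g"
      using g cc rc by (simp add: m_assoc)
    also have "\<dots> = g \<otimes> ((inv g \<otimes> r \<otimes> g) \<otimes> c) \<otimes> inv g"
      using centralizerD(2)[OF c r'] by simp
    also have "\<dots> = r \<otimes> (g \<otimes> c \<otimes> inv g)"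
      using g cc rc by (simp add: m_assoc)
    finally show "g \<otimes> c \<otimes> inv g \<otimes> r = r \<otimes> (g \<otimes> c \<otimes> inv g)" .
  qed (use g centralizerD(1)[OF c] in simp)
  then show ?thesis
    using subgroup_centralizer[OF N_carrier] by (simp add: normal_inv_iff)
qed

section \<open>The transfer into a central subgroup of finite index\<close>

lemma (in group_hom) subgroup_pow_preimage_one:
  assumes "comm_group H"
  shows "subgroup {g \<in> carrier G. h g [^]\<^bsub>H\<^esub> (n :: nat) = \<one>\<^bsub>H\<^esub>} G"
    (is "subgroup ?T G")
proof (rule G.subgroupI)
  show "?T \<subseteq> carrier G"
    by auto
  have "\<one> \<in> ?T"
    by simp
  then show "?T \<noteq> {}"
    by auto
next
  fix a b assume a: "a \<in> ?T" and b: "b \<in> ?T"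
  then have images: "h a \<in> carrier H" "h b \<in> carrier H"
    by auto
  have "h (a \<otimes> b) [^]\<^bsub>H\<^esub> n = (h a \<otimes>\<^bsub>H\<^esub> h b) [^]\<^bsub>H\<^esub> n"
    using a b by simp
  also have "\<dots> = h a [^]\<^bsub>H\<^esub> n \<otimes>\<^bsub>H\<^esub> h b [^]\<^bsub>H\<^esub> n"
    using H.pow_mult_distrib[OF comm_monoid.m_comm[OF comm_group.axioms(1)[OF assms] images] images] .
  also have "\<dots> = \<one>\<^bsub>H\<^esub>"
    using a b by simp
  finally show "a \<otimes> b \<in> ?T"
    using a b by simp
next
  fix a assume "a \<in> ?T"
  then show "inv a \<in> ?T"
    by (simp add: H.nat_pow_inv)
qed

locale central_finite_index = group G for G (structure) +
  fixes Z
  assumes subgroup_Z: "subgroup Z G"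
    and central: "\<lbrakk>g \<in> carrier G; z \<in> Z\<rbrakk> \<Longrightarrow> g \<otimes> z = z \<otimes> g"
    and finite_index: "finite (rcosets Z)"
begin

lemma Z_subset: "Z \<subseteq> carrier G"
  using subgroup_Z by (rule subgroup.subset)

lemma comm_group_Z: "comm_group (G\<lparr>carrier := Z\<rparr>)"
  using subgroup.subgroup_is_group[OF subgroup_Z is_group] central Z_subset
  by (intro group.group_comm_groupI) auto

definition coset_rep :: "'a set \<Rightarrow> 'a" where
  "coset_rep c = (SOME g. g \<in> carrier G \<and> c = Z #> g)"

lemma coset_rep: "c \<in> rcosets Z \<Longrightarrow> coset_rep c \<in> carrier G \<and> Z #> coset_rep c = c"
  unfolding coset_rep_def RCOSETS_def by (rule someI2_ex) auto

definition transfer_factor :: "'a \<Rightarrow> 'a set \<Rightarrow> 'a" where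
  "transfer_factor g c = coset_rep c \<otimes> g \<otimes> inv (coset_rep (c #> g))"

definition group_transfer :: "'a \<Rightarrow> 'a" where
  "group_transfer g = finprod (G\<lparr>carrier := Z\<rparr>) (transfer_factor g) (rcosets Z)"

lemma coset_rep_r_coset:
  assumes "c \<in> rcosets Z" "g \<in> carrier G"
  shows "Z #> (coset_rep c \<otimes> g) = Z #> coset_rep (c #> g)"
proof -
  have "Z #> (coset_rep c \<otimes> g) = c #> g"
    using coset_rep[OF assms(1)] assms(2) Z_subset by (simp add: coset_mult_assoc[symmetric])
  also have "\<dots> = Z #> coset_rep (c #> g)"
    using coset_rep rcosets_r_coset_closed[OF Z_subset assms] by simp
  finally show ?thesis .
qed

lemma transfer_factor_in_Z:
  assumes "c \<in> rcosets Z" "g \<in> carrier G"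
  shows "transfer_factor g c \<in> Z"
proof -
  have reps: "coset_rep c \<otimes> g \<in> carrier G" "coset_rep (c #> g) \<in> carrier G"
    using coset_rep[OF assms(1)] coset_rep[OF rcosets_r_coset_closed[OF Z_subset assms]] assms(2)
    by auto
  then have "Z #> transfer_factor g c = Z"
    using coset_rep_r_coset[OF assms] coset_mult_inv2[OF _ reps(1) reps(2) Z_subset]
    unfolding transfer_factor_def by simp
  then show ?thesis
    using coset_join1[OF _ _ subgroup_Z] reps unfolding transfer_factor_def by simp
qed

lemma transfer_factor_mult:
  assumes "c \<in> rcosets Z" "a \<in> carrier G" "b \<in> carrier G"
  shows "transfer_factor (a \<otimes> b) c = transfer_factor a c \<otimes> transfer_factor b (c #> a)"
proof -
  have ca: "c #> a \<in> rcosets Z"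
    using rcosets_r_coset_closed[OF Z_subset assms(1,2)] .
  have "c #> (a \<otimes> b) = c #> a #> b"
    using assms subgroup.rcosets_carrier[OF subgroup_Z is_group] by (simp add: coset_mult_assoc)
  moreover have "coset_rep c \<in> carrier G" "coset_rep (c #> a) \<in> carrier G"
    "coset_rep (c #> a #> b) \<in> carrier G"
    using coset_rep assms(1) ca rcosets_r_coset_closed[OF Z_subset ca assms(3)] by auto
  ultimately show ?thesis
    using assms(2,3) unfolding transfer_factor_def by (simp add: m_assoc)
qed

lemma group_transfer_mult:
  assumes "a \<in> carrier G" "b \<in> carrier G"
  shows "group_transfer (a \<otimes> b) = group_transfer a \<otimes> group_transfer b"
proof -
  interpret Z: comm_group "G\<lparr>carrier := Z\<rparr>"
    by (rule comm_group_Z)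
  have factor_Pi: "transfer_factor g \<in> rcosets Z \<rightarrow> Z" if "g \<in> carrier G" for g
    using transfer_factor_in_Z that by blast
  have shifted_Pi: "(\<lambda>c. transfer_factor b (c #> a)) \<in> rcosets Z \<rightarrow> Z"
    using transfer_factor_in_Z rcosets_r_coset_closed[OF Z_subset] assms by blast
  have "group_transfer (a \<otimes> b)
      = finprod (G\<lparr>carrier := Z\<rparr>) (\<lambda>c. transfer_factor a c \<otimes> transfer_factor b (c #> a)) (rcosets Z)"
    unfolding group_transfer_def
    using factor_Pi assms shifted_Pi
    by (intro Z.finprod_cong') (auto simp: transfer_factor_mult intro!: Z.m_closed[simplified])
  also have "\<dots> = group_transfer a
      \<otimes> finprod (G\<lparr>carrier := Z\<rparr>) (\<lambda>c. transfer_factor b (c #> a)) (rcosets Z)"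
    unfolding group_transfer_def using Z.finprod_multf factor_Pi[OF assms(1)] shifted_Pi by simp
  \<comment> \<open>right multiplication by a permutes the cosets\<close>
  also have "finprod (G\<lparr>carrier := Z\<rparr>) (\<lambda>c. transfer_factor b (c #> a)) (rcosets Z) = group_transfer b"
    unfolding group_transfer_def
    using Z.finprod_reindex[of "transfer_factor b" "\<lambda>c. c #> a" "rcosets Z"]
      bij_betw_rcosets_r_coset[OF subgroup_Z assms(1)] factor_Pi[OF assms(2)]
    by (simp add: bij_betw_def)
  finally show ?thesis .
qed

lemma group_transfer_central:
  assumes "z \<in> Z"
  shows "group_transfer z = z [^] card (rcosets Z)"
proof -
  interpret Z: comm_group "G\<lparr>carrier := Z\<rparr>"
    by (rule comm_group_Z)
  have zc: "z \<in> carrier G"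
    using assms Z_subset by blast
  have "transfer_factor z c = z" if c: "c \<in> rcosets Z" for c
  proof -
    have rep: "coset_rep c \<in> carrier G" "Z #> coset_rep c = c"
      using coset_rep[OF c] by auto
    have "c #> z = Z #> (coset_rep c \<otimes> z)"
      using coset_mult_assoc[OF Z_subset rep(1) zc] rep(2) by simp
    also have "\<dots> = Z #> z #> coset_rep c"
      using rep zc Z_subset central[OF rep(1) assms] by (simp add: coset_mult_assoc)
    also have "\<dots> = c"
      using rep subgroup.rcos_const[OF subgroup_Z is_group assms] by simp
    finally show ?thesis
      using rep zc central[OF rep(1) assms] unfolding transfer_factor_def by (simp add: m_assoc)
  qed
  then have "group_transfer z = finprod (G\<lparr>carrier := Z\<rparr>) (\<lambda>c. z) (rcosets Z)"
    unfolding group_transfer_def using assms by (intro Z.finprod_cong') auto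
  then show ?thesis
    using Z.finprod_const assms by (simp add: nat_pow_consistent[symmetric])
qed

lemma group_hom_transfer: "group_hom G (G\<lparr>carrier := Z\<rparr>) group_transfer"
proof -
  interpret Z: comm_group "G\<lparr>carrier := Z\<rparr>"
    by (rule comm_group_Z)
  have "group_transfer g \<in> Z" if "g \<in> carrier G" for g
    unfolding group_transfer_def using transfer_factor_in_Z that by (intro Z.finprod_closed[simplified]) auto
  then show ?thesis
    by (intro group_hom.intro group_hom_axioms.intro homI is_group Z.is_group) (auto simp: group_transfer_mult)
qed

lemma radicable_trivial_if_generated_by_exponent:
  fixes n :: nat
  assumes generated: "carrier G = generate G S" and exponent: "\<And>s. s \<in> S \<Longrightarrow> s [^] n = \<one>" "n > 0"
    and radicable: "radicable G Z"
  shows "Z = {\<one>}"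
proof -
  interpret V: group_hom G "G\<lparr>carrier := Z\<rparr>" group_transfer
    by (rule group_hom_transfer)
  define T where
    "T = {g \<in> carrier G. group_transfer g [^]\<^bsub>G\<lparr>carrier := Z\<rparr>\<^esub> n = \<one>\<^bsub>G\<lparr>carrier := Z\<rparr>\<^esub>}"
  have S_carrier: "S \<subseteq> carrier G"
    unfolding generated by (auto intro: generate.incl)
  have "S \<subseteq> T"
  proof
    fix s assume s: "s \<in> S"
    then have "group_transfer s [^]\<^bsub>G\<lparr>carrier := Z\<rparr>\<^esub> n = group_transfer (s [^] n)"
      using V.hom_nat_pow[of s n] S_carrier by auto
    also have "\<dots> = \<one>\<^bsub>G\<lparr>carrier := Z\<rparr>\<^esub>"
      using exponent(1)[OF s] V.hom_one by simp
    finally show "s \<in> T"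
      using s S_carrier by (simp add: T_def subset_iff)
  qed
  then have "generate G S \<subseteq> T"
    using generate_subgroup_incl V.subgroup_pow_preimage_one[OF comm_group_Z] unfolding T_def by blast
  then have T: "carrier G \<subseteq> T"
    using generated by simp
  have "z = \<one>" if z: "z \<in> Z" for z
  proof -
    let ?m = "card (rcosets Z)"
    have "?m > 0"
      using finite_index subgroup.subgroup_in_rcosets[OF subgroup_Z is_group] card_gt_0_iff by blast
    then obtain y where y: "y \<in> Z" "y [^] (?m * n) = z"
      using radicable z exponent(2) unfolding radicable_def by (meson nat_0_less_mult_iff)
    then have "z = group_transfer y [^] n"
      using group_transfer_central Z_subset by (auto simp: nat_pow_pow)
    also have "\<dots> = \<one>"
      using T y Z_subset by (auto simp: T_def nat_pow_consistent[symmetric])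
    finally show ?thesis .
  qed
  then show ?thesis
    using subgroup.one_closed[OF subgroup_Z] by blast
qed

end

lemma (in group) radicable_central_subgroup_trivial:
  fixes n :: nat
  assumes L: "L = generate G S" "S \<subseteq> carrier G"
    and Z: "subgroup Z G" "Z \<subseteq> L" "L \<subseteq> centralizer G Z" "radicable G Z"
    and finite_index: "finite (rcosets\<^bsub>G\<lparr>carrier := L\<rparr>\<^esub> Z)"
    and exponent: "\<And>s. s \<in> S \<Longrightarrow> s [^] n = \<one>" "n > 0"
  shows "Z = {\<one>}"
proof -
  let ?L = "G\<lparr>carrier := L\<rparr>"
  have L_subgroup: "subgroup L G"
    using L generate_is_subgroup by simp
  interpret L: central_finite_index ?L Z
  proof (intro central_finite_index.intro central_finite_index_axioms.intro)
    show "group ?L" "subgroup Z ?L"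
      using subgroup.subgroup_is_group[OF L_subgroup is_group] subgroup_incl[OF Z(1) L_subgroup Z(2)] .
  qed (use finite_index Z(3) in \<open>auto simp: centralizer_def\<close>)
  have "Z = {\<one>\<^bsub>?L\<^esub>}"
  proof (rule L.radicable_trivial_if_generated_by_exponent)
    have "S \<subseteq> L"
      unfolding L(1) by (auto intro: generate.incl)
    then show "carrier ?L = generate ?L S"
      using generate_consistent[OF _ L_subgroup] L by simp
    show "s [^]\<^bsub>?L\<^esub> n = \<one>\<^bsub>?L\<^esub>" if "s \<in> S" for s
      using exponent(1)[OF that] by (simp add: nat_pow_consistent[symmetric])
    show "radicable ?L Z"
      using Z(4) unfolding radicable_def by (simp add: nat_pow_consistent[symmetric])
  qed (rule exponent(2))
  then show ?thesis
    by simp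
qed

section \<open>The subgroup [G,x] and the normal closure of x\<close>

definition conjugates :: "('a, 'b) monoid_scheme \<Rightarrow> 'a \<Rightarrow> 'a set" where
  "conjugates G x = {g \<otimes>\<^bsub>G\<^esub> x \<otimes>\<^bsub>G\<^esub> inv\<^bsub>G\<^esub> g | g. g \<in> carrier G}"

lemma (in group) conjugates_subset_carrier: "x \<in> carrier G \<Longrightarrow> conjugates G x \<subseteq> carrier G"
  by (auto simp: conjugates_def)

lemma (in group) self_in_conjugates: "x \<in> carrier G \<Longrightarrow> x \<in> conjugates G x"
  unfolding conjugates_def by (rule CollectI, rule exI[of _ \<one>]) simp

lemma (in group) normal_closure_subset:
  assumes "N \<lhd> G" "x \<in> N"
  shows "generate G (conjugates G x) \<subseteq> N"
  using assms normal_imp_subgroup normal.inv_op_closed2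
  by (intro generate_subgroup_incl) (auto simp: conjugates_def)

lemma (in group) commutator_conj:
  assumes "a \<in> carrier G" "g \<in> carrier G" "x \<in> carrier G"
  shows "g \<otimes> commutator G a x \<otimes> inv g
    = commutator G (a \<otimes> inv g) x \<otimes> inv (commutator G (inv g) x)"
  using assms by (simp add: commutator_def m_assoc inv_mult_group)

lemma (in group) comm_subgroup_normal:
  assumes x: "x \<in> carrier G"
  shows "comm_subgroup G (carrier G) x \<lhd> G"
  unfolding comm_subgroup_def
proof (rule generate_normalI)
  let ?S = "{commutator G a x | a. a \<in> carrier G}"
  show S: "?S \<subseteq> carrier G"
    using x by (auto simp: commutator_def)
  fix g s assume g: "g \<in> carrier G" and "s \<in> ?S"
  then obtain a where a: "a \<in> carrier G" "s = commutator G a x"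
    by blast
  have "commutator G (a \<otimes> inv g) x \<in> generate G ?S" "commutator G (inv g) x \<in> generate G ?S"
    using a g by (auto intro: generate.incl)
  then show "g \<otimes> s \<otimes> inv g \<in> generate G ?S"
    using commutator_conj[OF a(1) g x] a(2) generate_m_inv_closed[OF S] by (simp add: generate.eng)
qed

lemma (in group) comm_subgroup_subset_normal_closure:
  assumes x: "x \<in> carrier G"
  shows "comm_subgroup G (carrier G) x \<subseteq> generate G (conjugates G x)"
  unfolding comm_subgroup_def
proof (rule generate_subgroup_incl)
  let ?L = "generate G (conjugates G x)"
  show L: "subgroup ?L G"
    using generate_is_subgroup[OF conjugates_subset_carrier[OF x]] .
  have "x \<in> ?L"
    using x self_in_conjugates by (intro generate.incl)
  moreover have "inv (inv a \<otimes> x \<otimes> inv (inv a)) \<in> ?L" if "a \<in> carrier G" for a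
    using that inv_closed unfolding conjugates_def by (intro generate.inv) blast
  moreover have "commutator G a x = inv (inv a \<otimes> x \<otimes> inv (inv a)) \<otimes> x" if "a \<in> carrier G" for a
    using that x by (simp add: commutator_def inv_mult_group m_assoc)
  ultimately show "{commutator G a x | a. a \<in> carrier G} \<subseteq> ?L"
    using subgroup.m_closed[OF L] by auto
qed

lemma (in group) comm_subgroup_trivial_imp_centralizer:
  assumes "x \<in> carrier G" "H \<subseteq> carrier G" "comm_subgroup G H x = {\<one>}"
  shows "x \<in> centralizer G H"
proof -
  have "x \<otimes> h = h \<otimes> x" if h: "h \<in> H" for h
  proof -
    have hc: "h \<in> carrier G"
      using h assms(2) by blast
    have "commutator G h x \<in> comm_subgroup G H x"
      unfolding comm_subgroup_def using h by (intro generate.incl) auto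
    then have "x \<otimes> h = x \<otimes> h \<otimes> commutator G h x"
      using assms(1,3) hc by simp
    also have "\<dots> = h \<otimes> x"
      using assms(1) hc by (simp add: commutator_def m_assoc)
    finally show ?thesis .
  qed
  then show ?thesis
    using assms(1) by (simp add: centralizer_def)
qed

lemma (in group) periodic_submonoid_is_subgroup:
  assumes "periodic_group G" and Q: "Q \<subseteq> carrier G" "\<one> \<in> Q"
    and mult: "\<And>a b. a \<in> Q \<Longrightarrow> b \<in> Q \<Longrightarrow> a \<otimes> b \<in> Q"
  shows "subgroup Q G"
proof (rule subgroupI)
  fix a assume a: "a \<in> Q"
  then obtain n :: nat where n: "n > 0" "a [^] n = \<one>"
    using assms(1) Q(1) by (auto simp: periodic_group_def)
  have pow_in_Q: "a [^] (k :: nat) \<in> Q" for k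
  proof (induction k)
    case (Suc k)
    then show ?case
      using mult[OF _ a] by simp
  qed (simp add: Q(2))
  have "a [^] n = a [^] Suc (n - 1)"
    using n(1) by simp
  then have "a [^] (n - 1) \<otimes> a = a [^] n"
    by simp
  then have "inv a = a [^] (n - 1)"
    using a Q(1) n(2) by (intro inv_equality) auto
  then show "inv a \<in> Q"
    using pow_in_Q by simp
next
  show "Q \<noteq> {}"
    using Q(2) by blast
qed (use Q(1) mult in simp_all)

lemma (in group) subgroup_comm_subgroup_mult_powers:
  assumes periodic: "periodic_group G" and x: "x \<in> carrier G"
  shows "subgroup {k \<otimes> x [^] (i :: nat) | k i. k \<in> comm_subgroup G (carrier G) x} G"
    (is "subgroup ?Q G")
proof (rule periodic_submonoid_is_subgroup[OF periodic])
  let ?K = "comm_subgroup G (carrier G) x"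
  interpret K: normal ?K G
    using comm_subgroup_normal[OF x] .
  show "?Q \<subseteq> carrier G"
    using x K.subset by auto
  have "\<one> = \<one> \<otimes> x [^] (0 :: nat)"
    by simp
  then show "\<one> \<in> ?Q"
    using K.one_closed by blast
  fix a b assume "a \<in> ?Q" "b \<in> ?Q"
  then obtain k k' and i j :: nat where k: "k \<in> ?K" "k' \<in> ?K"
    and ab: "a = k \<otimes> x [^] i" "b = k' \<otimes> x [^] j"
    by blast
  have "k \<in> carrier G" "k' \<in> carrier G"
    using k K.subset by auto
  then have "a \<otimes> b = (k \<otimes> (x [^] i \<otimes> k' \<otimes> inv (x [^] i))) \<otimes> (x [^] i \<otimes> x [^] j)"
    using ab x by (simp add: m_assoc)
  then have "a \<otimes> b = (k \<otimes> (x [^] i \<otimes> k' \<otimes> inv (x [^] i))) \<otimes> x [^] (i + j)"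
    using x by (simp add: nat_pow_mult)
  moreover have "k \<otimes> (x [^] i \<otimes> k' \<otimes> inv (x [^] i)) \<in> ?K"
    using k x K.inv_op_closed2 K.m_closed by simp
  ultimately show "a \<otimes> b \<in> ?Q"
    by blast
qed

lemma (in group) normal_closure_eq_comm_subgroup_mult_powers:
  assumes periodic: "periodic_group G" and x: "x \<in> carrier G"
  shows "generate G (conjugates G x)
    = {k \<otimes> x [^] (i :: nat) | k i. k \<in> comm_subgroup G (carrier G) x}"
    (is "?L = ?Q")
proof
  let ?K = "comm_subgroup G (carrier G) x"
  interpret K: normal ?K G
    using comm_subgroup_normal[OF x] .
  have "conjugates G x \<subseteq> ?Q"
  proof
    fix c assume "c \<in> conjugates G x"
    then obtain g where g: "g \<in> carrier G" "c = g \<otimes> x \<otimes> inv g"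
      by (auto simp: conjugates_def)
    have "c = inv (x \<otimes> commutator G (inv g) x \<otimes> inv x) \<otimes> x [^] (1 :: nat)"
      using g x by (simp add: commutator_def inv_mult_group m_assoc)
    moreover have "commutator G (inv g) x \<in> ?K"
      unfolding comm_subgroup_def using g by (intro generate.incl) auto
    then have "inv (x \<otimes> commutator G (inv g) x \<otimes> inv x) \<in> ?K"
      using x K.inv_op_closed2 K.m_inv_closed by blast
    ultimately show "c \<in> ?Q"
      by blast
  qed
  then show "?L \<subseteq> ?Q"
    using generate_subgroup_incl subgroup_comm_subgroup_mult_powers[OF periodic x] by blast
next
  let ?K = "comm_subgroup G (carrier G) x"
  have L: "subgroup ?L G"
    using generate_is_subgroup[OF conjugates_subset_carrier[OF x]] .
  have "x \<in> ?L"
    using x self_in_conjugates by (intro generate.incl)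
  show "?Q \<subseteq> ?L"
  proof
    fix q assume "q \<in> ?Q"
    then obtain k and i :: nat where "k \<in> ?K" "q = k \<otimes> x [^] i"
      by blast
    moreover have "x [^] i \<in> ?L"
      using L \<open>x \<in> ?L\<close> by (induction i) (auto intro: subgroup.one_closed subgroup.m_closed)
    ultimately show "q \<in> ?L"
      using comm_subgroup_subset_normal_closure[OF x] subgroup.m_closed[OF L] by blast
  qed
qed

lemma (in group) finite_index_mult_powers:
  fixes n :: nat
  assumes R: "R \<subseteq> carrier G" and K: "K \<subseteq> carrier G" "finite (rcosets\<^bsub>G\<lparr>carrier := K\<rparr>\<^esub> R)"
    and x: "x \<in> carrier G" "x [^] n = \<one>" "n > 0"
  shows "finite (rcosets\<^bsub>G\<lparr>carrier := {k \<otimes> x [^] (i :: nat) | k i. k \<in> K}\<rparr>\<^esub> R)"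
proof (rule finite_subset)
  let ?C = "rcosets\<^bsub>G\<lparr>carrier := K\<rparr>\<^esub> R"
  show "finite ((\<lambda>(c, i). c #> x [^] i) ` (?C \<times> {..<n}))"
    using K(2) by simp
  show "rcosets\<^bsub>G\<lparr>carrier := {k \<otimes> x [^] (i :: nat) | k i. k \<in> K}\<rparr>\<^esub> R
      \<subseteq> (\<lambda>(c, i). c #> x [^] i) ` (?C \<times> {..<n})"
  proof
    fix c assume "c \<in> rcosets\<^bsub>G\<lparr>carrier := {k \<otimes> x [^] (i :: nat) | k i. k \<in> K}\<rparr>\<^esub> R"
    then obtain k and i :: nat where k: "k \<in> K" and c: "c = R #> (k \<otimes> x [^] i)"
      by (auto simp: RCOSETS_def)
    have "x [^] i = (x [^] n) [^] (i div n) \<otimes> x [^] (i mod n)"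
      using x(1) by (simp add: nat_pow_pow nat_pow_mult)
    then have "x [^] i = x [^] (i mod n)"
      using x by simp
    then have "c = (R #> k) #> x [^] (i mod n)"
      using c k K(1) R x(1) by (simp add: coset_mult_assoc subset_iff)
    moreover have "R #> k \<in> ?C" "i mod n \<in> {..<n}"
      using k x(3) by (auto simp: RCOSETS_def)
    ultimately show "c \<in> (\<lambda>(c, i). c #> x [^] i) ` (?C \<times> {..<n})"
      by force
  qed
qed

lemma (in group) radicable_normal_of_finite_index:
  assumes K: "K \<lhd> G" and R: "R \<lhd> G\<lparr>carrier := K\<rparr>"
    and finite_index: "finite (rcosets\<^bsub>G\<lparr>carrier := K\<rparr>\<^esub> R)" and radicable: "radicable G R"
  shows "R \<lhd> G"
proof -
  let ?K = "G\<lparr>carrier := K\<rparr>"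
  let ?m = "card (rcosets\<^bsub>?K\<^esub> R)"
  interpret K: normal K G
    by (rule K)
  have R_subgroup: "subgroup R ?K"
    using R by (rule normal_imp_subgroup)
  have R_subset: "R \<subseteq> K"
    using subgroup.subset[OF R_subgroup] by simp
  have "R \<in> rcosets\<^bsub>?K\<^esub> R"
    using subgroup.subgroup_in_rcosets[OF R_subgroup K.subgroup_is_group[OF is_group]] .
  then have "?m > 0"
    using finite_index card_gt_0_iff by blast
  have "g \<otimes> r \<otimes> inv g \<in> R" if g: "g \<in> carrier G" and r: "r \<in> R" for g r
  proof -
    obtain y where y: "y \<in> R" "y [^] ?m = r"
      using radicable r \<open>?m > 0\<close> unfolding radicable_def by blast
    have "g \<otimes> y \<otimes> inv g \<in> K"
      using K.inv_op_closed2[OF g] y R_subset by blast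
    then have "(g \<otimes> y \<otimes> inv g) [^] ?m \<in> R"
      using group.pow_card_rcosets_in_normal[OF K.subgroup_is_group[OF is_group] R finite_index, of "g \<otimes> y \<otimes> inv g"]
      by (simp add: nat_pow_consistent[symmetric])
    moreover have "(g \<otimes> y \<otimes> inv g) [^] ?m = g \<otimes> r \<otimes> inv g"
      using conj_nat_pow[of y g ?m] y g R_subset K.subset by blast
    ultimately show ?thesis
      by simp
  qed
  then show ?thesis
    using incl_subgroup[OF K.subgroup_axioms R_subgroup] by (simp add: normal_inv_iff)
qed

theorem lemma2p6:
  fixes G (structure) and x and R
  assumes "periodic_group G"
    and "x \<in> carrier G"
    and "chernikov G (comm_subgroup G (carrier G) x)"
    and "radicable_part_of G (comm_subgroup G (carrier G) x) R"
    and "comm_subgroup G R x = {\<one>}"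
  shows "R = {\<one>}"
proof -
  interpret group G
    using assms(1) by (simp add: periodic_group_def)
  let ?K = "comm_subgroup G (carrier G) x"
  let ?L = "generate G (conjugates G x)"
  have R: "R \<lhd> G\<lparr>carrier := ?K\<rparr>" "radicable G R" "finite (rcosets\<^bsub>G\<lparr>carrier := ?K\<rparr>\<^esub> R)"
    using assms(4) by (auto simp: radicable_part_of_def)
  have K_normal: "?K \<lhd> G"
    using comm_subgroup_normal[OF assms(2)] .
  have R_normal: "R \<lhd> G"
    using radicable_normal_of_finite_index[OF K_normal R(1,3,2)] .
  have K_carrier: "?K \<subseteq> carrier G" and R_subset: "R \<subseteq> ?K"
    using subgroup.subset[OF normal_imp_subgroup[OF K_normal]] subgroup.subset[OF normal_imp_subgroup[OF R(1)]]
    by auto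
  have "x \<in> centralizer G R"
    using comm_subgroup_trivial_imp_centralizer[OF assms(2) subset_trans[OF R_subset K_carrier] assms(5)] .
  then have L_centralizes: "?L \<subseteq> centralizer G R"
    using normal_closure_subset normal_centralizer[OF R_normal] by blast
  obtain n :: nat where n: "n > 0" "x [^] n = \<one>"
    using assms(1,2) by (auto simp: periodic_group_def)
  have finite_index: "finite (rcosets\<^bsub>G\<lparr>carrier := ?L\<rparr>\<^esub> R)"
    using finite_index_mult_powers[OF subset_trans[OF R_subset K_carrier] K_carrier R(3) assms(2) n(2,1)]
    by (simp add: normal_closure_eq_comm_subgroup_mult_powers[OF assms(1,2)])
  have exponent: "c [^] n = \<one>" if "c \<in> conjugates G x" for c
    using that assms(2) n(2) conj_nat_pow by (auto simp: conjugates_def)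
  show ?thesis
    using radicable_central_subgroup_trivial[OF refl conjugates_subset_carrier[OF assms(2)]
        normal_imp_subgroup[OF R_normal] subset_trans[OF R_subset comm_subgroup_subset_normal_closure[OF assms(2)]]
        L_centralizes R(2) finite_index exponent n(1)] .
qed

end
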